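(* Let $d\ge 1$ and $2\le n_1\le n_2\le\cdots\le n_d$ be integers, and let $G=P_{n_1}\times P_{n_2}\times\cdots\times P_{n_d}$. Then $$\sigma_T(G)\le 2\left(\left\lfloor\tfrac{n_1}{2}\right\rfloor+\left\lfloor\tfrac{n_2}{2}\right\rfloor+\cdots+\left\lfloor\tfrac{n_{d-1}}{2}\right\rfloor\right)+1.$$
   Context: $P_n$ is the path on $n$ vertices and $\times$ is the Cartesian product, so $G$ is the $d$-dimensional grid with vertex set $\{(x_1,\dots,x_d): x_i\in\{1,\dots,n_i\}\}$, two vertices adjacent iff they differ by $1$ in exactly one coordinate and agree in all others. For a spanning tree $T$ of a connected graph $G$, $d_T(u,v)$ is the distance between $u$ and $v$ in $T$, $\sigma_T(G,T):=\max_{uv\in E(G)} d_T(u,v)$, and $\sigma_T(G):=\min\{\sigma_T(G,T): T \text{ a spanning tree of } G\}$. An empty sum is $0$. *)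

theory Defs
  imports Main
begin

definition walk :: "'a set set \<Rightarrow> 'a list \<Rightarrow> bool" where
  "walk E xs \<longleftrightarrow> xs \<noteq> [] \<and> (\<forall>i. Suc i < length xs \<longrightarrow> {xs ! i, xs ! Suc i} \<in> E)"

definition walk_betw :: "'a set set \<Rightarrow> 'a \<Rightarrow> 'a list \<Rightarrow> 'a \<Rightarrow> bool" where
  "walk_betw E u xs v \<longleftrightarrow> walk E xs \<and> hd xs = u \<and> last xs = v"

definition connected_graph :: "'a set \<Rightarrow> 'a set set \<Rightarrow> bool" where
  "connected_graph V E \<longleftrightarrow> V \<noteq> {} \<and>
     (\<forall>u\<in>V. \<forall>v\<in>V. \<exists>xs. walk_betw E u xs v \<and> set xs \<subseteq> V)"

definition has_cycle :: "'a set set \<Rightarrow> bool" where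
  "has_cycle E \<longleftrightarrow> (\<exists>xs. length xs \<ge> 3 \<and> distinct xs \<and> walk E (xs @ [hd xs]))"

definition spanning_tree :: "'a set \<Rightarrow> 'a set set \<Rightarrow> 'a set set \<Rightarrow> bool" where
  "spanning_tree V E T \<longleftrightarrow> T \<subseteq> E \<and> connected_graph V T \<and> \<not> has_cycle T"

definition gdist :: "'a set set \<Rightarrow> 'a \<Rightarrow> 'a \<Rightarrow> nat" where
  "gdist T u v = (LEAST k. \<exists>xs. walk_betw T u xs v \<and> length xs = Suc k)"

definition stretch :: "'a set set \<Rightarrow> 'a set set \<Rightarrow> nat" where
  "stretch E T = Max {gdist T u v | u v. {u, v} \<in> E \<and> u \<noteq> v}"

definition tree_spanner_index :: "'a set \<Rightarrow> 'a set set \<Rightarrow> nat" where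
  "tree_spanner_index V E = Min {stretch E T | T. spanning_tree V E T}"

text \<open>The grid P_{n_1} x ... x P_{n_d}; vertices are functions nat => nat,
  with x i in {1..n_i} for i < d and x i = 0 for i >= d.\<close>
definition grid_vertices :: "nat list \<Rightarrow> (nat \<Rightarrow> nat) set" where
  "grid_vertices ns = {x. (\<forall>i<length ns. 1 \<le> x i \<and> x i \<le> ns ! i) \<and> (\<forall>i\<ge>length ns. x i = 0)}"

definition grid_edges :: "nat list \<Rightarrow> (nat \<Rightarrow> nat) set set" where
  "grid_edges ns = {{x, y} | x y. x \<in> grid_vertices ns \<and> y \<in> grid_vertices ns \<and>
      (\<exists>i<length ns. (x i + 1 = y i) \<and> (\<forall>j. j \<noteq> i \<longrightarrow> x j = y j))}"

end

theory Submission
  imports Defs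
begin

text \<open>Build a comb-shaped spanning tree. Its spine is the line along the last axis through the
  centre of the other axes; a vertex off the spine moves its first off-centre coordinate one step
  towards the centre, and a spine vertex moves one step down the last axis. Every vertex reaches its
  spine point within \<open>\<Sum>i<d-1. \<lfloor>n\<^sub>i/2\<rfloor>\<close> tree steps, and the ends of a grid edge
  have the same spine point (edge along one of the first \<open>d - 1\<close> axes) or adjacent spine points
  (edge along the last axis). Hence the tree distance of adjacent vertices is at most twice that
  sum plus one.\<close>

lemma walk_Cons: "walk E (x # xs) \<longleftrightarrow> xs = [] \<or> {x, hd xs} \<in> E \<and> walk E xs"
proof (cases xs)
  case (Cons y ys)
  have "walk E (x # y # ys) \<longleftrightarrow> {x, y} \<in> E \<and> walk E (y # ys)"
    unfolding walk_def by (auto simp: less_Suc_eq_0_disj)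
  then show ?thesis using Cons by simp
qed (simp add: walk_def)

lemma walk_append:
  assumes "walk E xs" "walk E ys" "last xs = hd ys"
  shows "walk E (xs @ tl ys)"
  using assms
proof (induction xs)
  case (Cons a xs)
  show ?case
  proof (cases xs)
    case Nil
    with Cons.prems have "ys = a # tl ys" by (metis last_ConsL list.collapse walk_def)
    with Cons.prems Nil show ?thesis by simp
  next
    case (Cons b zs)
    with Cons.prems Cons.IH show ?thesis by (auto simp: walk_Cons)
  qed
qed (simp add: walk_def)

lemma walk_rev: "walk E xs \<Longrightarrow> walk E (rev xs)"
  unfolding walk_def
proof (intro conjI allI impI)
  fix i assume w: "xs \<noteq> [] \<and> (\<forall>i. Suc i < length xs \<longrightarrow> {xs ! i, xs ! Suc i} \<in> E)"
    and i: "Suc i < length (rev xs)"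
  define j where "j = length xs - 2 - i"
  have "Suc j < length xs" "rev xs ! i = xs ! Suc j" "rev xs ! Suc i = xs ! j"
    using i by (auto simp: rev_nth j_def Suc_diff_Suc numeral_2_eq_2)
  with w show "{rev xs ! i, rev xs ! Suc i} \<in> E" by (auto simp: insert_commute)
qed simp

lemma walk_betw_join:
  assumes "walk E xs" "walk E ys" "last xs = last ys"
  shows "walk_betw E (hd xs) (xs @ tl (rev ys)) (hd ys)"
proof -
  have ne: "xs \<noteq> []" "ys \<noteq> []" using assms by (auto simp: walk_def)
  have "walk E (xs @ tl (rev ys))"
    using walk_append[OF assms(1) walk_rev[OF assms(2)]] assms(3) ne by (simp add: hd_rev)
  moreover obtain z zs where z: "rev ys = z # zs" using ne by (cases "rev ys") auto
  then have "last (xs @ tl (rev ys)) = hd ys"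
    using assms(3) by (metis hd_rev last.simps last_append last_rev list.sel(1,3) rev_rev_ident)
  ultimately show ?thesis using ne unfolding walk_betw_def by simp
qed

lemma gdist_le_length: "walk_betw T u xs v \<Longrightarrow> gdist T u v \<le> length xs - 1"
  unfolding gdist_def walk_betw_def walk_def
  by (rule Least_le) (metis Suc_pred' length_greater_0_conv)

lemma closed_walk_edge:
  assumes "walk E (xs @ [hd xs])" "i < length xs"
  shows "{xs ! i, xs ! (Suc i mod length xs)} \<in> E"
proof -
  have "{(xs @ [hd xs]) ! i, (xs @ [hd xs]) ! Suc i} \<in> E"
    using assms unfolding walk_def by simp
  moreover have "(xs @ [hd xs]) ! Suc i = xs ! (Suc i mod length xs)"
  proof (cases "Suc i < length xs")
    case False
    then have "Suc i = length xs" using assms(2) by simp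
    then show ?thesis by (cases xs) (auto simp: nth_append)
  qed (simp add: nth_append)
  ultimately show ?thesis using assms(2) by (simp add: nth_append)
qed

lemma has_cycle_peak:
  fixes f :: "'a \<Rightarrow> nat"
  assumes "has_cycle E"
  obtains a b c where "{a, b} \<in> E" "{a, c} \<in> E" "b \<noteq> c" "f b \<le> f a" "f c \<le> f a"
proof -
  obtain xs where xs: "length xs \<ge> 3" "distinct xs" "walk E (xs @ [hd xs])"
    using assms unfolding has_cycle_def by blast
  define n where "n = length xs"
  obtain k where k: "k < n" "\<forall>i<n. f (xs ! i) \<le> f (xs ! k)"
  proof -
    have "set xs \<noteq> {}" using xs(1) by auto
    then obtain y where "y \<in> set xs" "f y = Max (f ` set xs)"
      by (metis (mono_tags) Max_in empty_is_image finite_imageI finite_set imageE)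
    then have "y \<in> set xs" "\<forall>z\<in>set xs. f z \<le> f y" by simp_all
    then show thesis using that unfolding n_def by (metis in_set_conv_nth nth_mem)
  qed
  define j where "j = (if k = 0 then n - 1 else k - 1)"
  define l where "l = Suc k mod n"
  have j: "j < n" "Suc j mod n = k" and l: "l < n" and "j \<noteq> l"
    using k(1) xs(1) by (auto simp: j_def l_def n_def mod_Suc)
  then have "xs ! j \<noteq> xs ! l" using xs(2) by (simp add: nth_eq_iff_index_eq n_def)
  moreover have "{xs ! k, xs ! j} \<in> E" "{xs ! k, xs ! l} \<in> E"
    using closed_walk_edge[OF xs(3), of j] closed_walk_edge[OF xs(3), of k] j k(1) l
    by (simp_all add: n_def l_def insert_commute)
  ultimately show thesis using that k(2) j(1) l by blast
qed

lemma stretch_le: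
  assumes "{u0, v0} \<in> E" "u0 \<noteq> v0"
    and "\<And>u v. {u, v} \<in> E \<Longrightarrow> u \<noteq> v \<Longrightarrow> gdist T u v \<le> k"
  shows "stretch E T \<le> k"
proof -
  let ?A = "{gdist T u v | u v. {u, v} \<in> E \<and> u \<noteq> v}"
  have "?A \<subseteq> {..k}" using assms(3) by auto
  then have "finite ?A" by (rule finite_subset) simp
  moreover have "?A \<noteq> {}" using assms(1,2) by blast
  ultimately show ?thesis using assms(3) unfolding stretch_def by auto
qed

lemma tree_spanner_index_le:
  assumes "finite E" "spanning_tree V E T"
  shows "tree_spanner_index V E \<le> stretch E T"
proof -
  have "{stretch E T | T. spanning_tree V E T} \<subseteq> stretch E ` Pow E"
    unfolding spanning_tree_def by auto
  then have "finite {stretch E T | T. spanning_tree V E T}"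
    using assms(1) by (meson finite_Pow_iff finite_imageI finite_subset)
  then show ?thesis unfolding tree_spanner_index_def using assms(2) by (auto intro: Min_le)
qed

definition parent_tree :: "'a set \<Rightarrow> 'a \<Rightarrow> ('a \<Rightarrow> 'a) \<Rightarrow> 'a set set" where
  "parent_tree V r p = {{x, p x} | x. x \<in> V \<and> x \<noteq> r}"

fun parent_path :: "('a \<Rightarrow> 'a) \<Rightarrow> 'a \<Rightarrow> nat \<Rightarrow> 'a list" where
  "parent_path p x 0 = [x]"
| "parent_path p x (Suc k) = x # parent_path p (p x) k"

lemma length_parent_path [simp]: "length (parent_path p x k) = Suc k"
  by (induction k arbitrary: x) auto

lemma hd_parent_path [simp]: "hd (parent_path p x k) = x"
  by (cases k) auto

lemma parent_path_not_Nil [simp]: "parent_path p x k \<noteq> []"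
  by (cases k) auto

lemma last_parent_path [simp]: "last (parent_path p x k) = (p ^^ k) x"
  by (induction k arbitrary: x) (auto simp: funpow_swap1)

locale parent_map =
  fixes V :: "'a set" and r :: 'a and p :: "'a \<Rightarrow> 'a" and h :: "'a \<Rightarrow> nat"
  assumes root_in: "r \<in> V"
    and parent_in: "\<And>y. y \<in> V \<Longrightarrow> y \<noteq> r \<Longrightarrow> p y \<in> V"
    and height_parent: "\<And>y. y \<in> V \<Longrightarrow> y \<noteq> r \<Longrightarrow> h (p y) + 1 = h y"
    and height_eq_0_iff: "\<And>y. y \<in> V \<Longrightarrow> h y = 0 \<longleftrightarrow> y = r"
begin

abbreviation tree :: "'a set set" where "tree \<equiv> parent_tree V r p"

lemma funpow_parent:
  assumes "x \<in> V" "i \<le> h x"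
  shows "(p ^^ i) x \<in> V \<and> h ((p ^^ i) x) = h x - i"
  using assms(2)
proof (induction i)
  case (Suc i)
  then have y: "(p ^^ i) x \<in> V" "h ((p ^^ i) x) = h x - i" by simp_all
  then have "(p ^^ i) x \<noteq> r" using Suc.prems height_eq_0_iff by force
  with y have "p ((p ^^ i) x) \<in> V" "h (p ((p ^^ i) x)) + 1 = h x - i"
    using parent_in height_parent by auto
  then show ?case using Suc.prems by simp
qed (simp add: assms(1))

lemma funpow_height_root: "x \<in> V \<Longrightarrow> (p ^^ h x) x = r"
  using funpow_parent[of x "h x"] height_eq_0_iff by auto

lemma walk_parent_path:
  assumes "x \<in> V" "k \<le> h x"
  shows "walk tree (parent_path p x k) \<and> set (parent_path p x k) \<subseteq> V"
  using assms
proof (induction k arbitrary: x)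
  case (Suc k)
  then have "x \<noteq> r" using height_eq_0_iff by fastforce
  then have "p x \<in> V" "k \<le> h (p x)" "{x, p x} \<in> tree"
    using Suc.prems parent_in height_parent[of x] unfolding parent_tree_def by auto
  then show ?case using Suc.IH[of "p x"] Suc.prems(1) by (simp add: walk_Cons)
qed (simp add: walk_def)

lemma walk_common_ancestor:
  assumes "x \<in> V" "y \<in> V" "a \<le> h x" "b \<le> h y" "(p ^^ a) x = (p ^^ b) y"
  obtains xs where "walk_betw tree x xs y" "set xs \<subseteq> V" "length xs = a + b + 1"
proof
  let ?xs = "parent_path p x a @ tl (rev (parent_path p y b))"
  have wx: "walk tree (parent_path p x a)" "set (parent_path p x a) \<subseteq> V"
    using walk_parent_path[OF assms(1,3)] by blast+
  have wy: "walk tree (parent_path p y b)" "set (parent_path p y b) \<subseteq> V"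
    using walk_parent_path[OF assms(2,4)] by blast+
  show "walk_betw tree x ?xs y"
    using walk_betw_join[OF wx(1) wy(1)] assms(5) by simp
  have "set (tl (rev (parent_path p y b))) \<subseteq> set (parent_path p y b)"
    by (metis list.set_sel(2) set_rev subsetI tl_Nil)
  then show "set ?xs \<subseteq> V" using wx(2) wy(2) by auto
  show "length ?xs = a + b + 1" by simp
qed

lemma gdist_le_common_ancestor:
  assumes "x \<in> V" "y \<in> V" "a \<le> h x" "b \<le> h y" "(p ^^ a) x = (p ^^ b) y"
  shows "gdist tree x y \<le> a + b"
proof -
  obtain xs where "walk_betw tree x xs y" "length xs = a + b + 1"
    using walk_common_ancestor[OF assms] by blast
  then show ?thesis using gdist_le_length[of tree x xs y] by simp
qed

lemma connected_parent_tree: "connected_graph V tree"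
proof -
  have "\<exists>xs. walk_betw tree u xs v \<and> set xs \<subseteq> V" if uv: "u \<in> V" "v \<in> V" for u v
  proof -
    have "(p ^^ h u) u = (p ^^ h v) v" using funpow_height_root uv by presburger
    then obtain xs where "walk_betw tree u xs v" "set xs \<subseteq> V" "length xs = h u + h v + 1"
      by (rule walk_common_ancestor[OF uv order_refl order_refl])
    then show ?thesis by blast
  qed
  then show ?thesis unfolding connected_graph_def using root_in by blast
qed

lemma parent_tree_edge_down:
  assumes "{a, b} \<in> tree" "h b \<le> h a"
  shows "b = p a"
proof -
  obtain x where x: "{a, b} = {x, p x}" "x \<in> V" "x \<noteq> r"
    using assms(1) unfolding parent_tree_def by blast
  then have "a = x \<and> b = p x \<or> a = p x \<and> b = x" "h (p x) + 1 = h x"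
    using height_parent by (auto simp: doubleton_eq_iff)
  with assms(2) show ?thesis by auto
qed

text \<open>The top vertex of a cycle would need two distinct lower neighbours, but its only lower neighbour is its parent.\<close>

lemma acyclic_parent_tree: "\<not> has_cycle tree"
proof
  assume "has_cycle tree"
  then obtain a b c where "{a, b} \<in> tree" "{a, c} \<in> tree" "b \<noteq> c" "h b \<le> h a" "h c \<le> h a"
    by (rule has_cycle_peak)
  then show False using parent_tree_edge_down by blast
qed

lemma spanning_tree_parent_tree:
  assumes "\<And>y. y \<in> V \<Longrightarrow> y \<noteq> r \<Longrightarrow> {y, p y} \<in> E"
  shows "spanning_tree V E tree"
proof -
  have "tree \<subseteq> E" using assms unfolding parent_tree_def by blast
  then show ?thesis
    unfolding spanning_tree_def using connected_parent_tree acyclic_parent_tree by blast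
qed

end

definition nat_dist :: "nat \<Rightarrow> nat \<Rightarrow> nat" where
  "nat_dist a b = (a - b) + (b - a)"

definition grid_centre :: "nat list \<Rightarrow> nat \<Rightarrow> nat" where
  "grid_centre ns i = (ns ! i + 1) div 2"

definition centre_offset :: "nat list \<Rightarrow> (nat \<Rightarrow> nat) \<Rightarrow> nat" where
  "centre_offset ns x = (\<Sum>i<length ns - 1. nat_dist (x i) (grid_centre ns i))"

definition spine_point :: "nat list \<Rightarrow> (nat \<Rightarrow> nat) \<Rightarrow> nat \<Rightarrow> nat" where
  "spine_point ns x = (\<lambda>i. if i < length ns - 1 then grid_centre ns i else x i)"

definition grid_root :: "nat list \<Rightarrow> nat \<Rightarrow> nat" where
  "grid_root ns = (\<lambda>i. if i < length ns - 1 then grid_centre ns i else if i = length ns - 1 then 1 else 0)"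

definition step_toward :: "nat \<Rightarrow> nat \<Rightarrow> nat" where
  "step_toward c a = (if a < c then Suc a else a - 1)"

definition grid_parent :: "nat list \<Rightarrow> (nat \<Rightarrow> nat) \<Rightarrow> nat \<Rightarrow> nat" where
  "grid_parent ns x =
     (if centre_offset ns x = 0 then x(length ns - 1 := x (length ns - 1) - 1)
      else let j = LEAST j. j < length ns - 1 \<and> x j \<noteq> grid_centre ns j
           in x(j := step_toward (grid_centre ns j) (x j)))"

definition grid_height :: "nat list \<Rightarrow> (nat \<Rightarrow> nat) \<Rightarrow> nat" where
  "grid_height ns x = centre_offset ns x + (x (length ns - 1) - 1)"

abbreviation grid_tree :: "nat list \<Rightarrow> (nat \<Rightarrow> nat) set set" where
  "grid_tree ns \<equiv> parent_tree (grid_vertices ns) (grid_root ns) (grid_parent ns)"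

lemma nat_dist_eq_0_iff [simp]: "nat_dist a b = 0 \<longleftrightarrow> a = b"
  by (auto simp: nat_dist_def)

lemma nat_dist_centre_le:
  assumes "1 \<le> a" "a \<le> n" shows "nat_dist a ((n + 1) div 2) \<le> n div 2"
proof -
  have "(n + 1) div 2 \<le> n div 2 + 1" "n - (n + 1) div 2 = n div 2" by presburger+
  then show ?thesis using assms unfolding nat_dist_def by linarith
qed

lemma nat_dist_step_toward: "a \<noteq> c \<Longrightarrow> nat_dist (step_toward c a) c + 1 = nat_dist a c"
  unfolding nat_dist_def step_toward_def by auto

lemma centre_offset_eq_0_iff: "centre_offset ns x = 0 \<longleftrightarrow> (\<forall>j<length ns - 1. x j = grid_centre ns j)"
  unfolding centre_offset_def by auto

lemma centre_offset_upd:
  assumes "j < length ns - 1"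
  shows "centre_offset ns (x(j := a)) + nat_dist (x j) (grid_centre ns j)
       = centre_offset ns x + nat_dist a (grid_centre ns j)"
proof -
  let ?d = "\<lambda>x i. nat_dist (x i) (grid_centre ns i)" and ?I = "{..<length ns - 1} - {j}"
  have "sum (?d (x(j := a))) ?I = sum (?d x) ?I" by (rule sum.cong) auto
  then show ?thesis
    using assms unfolding centre_offset_def by (simp add: sum.remove[of _ j])
qed

lemma centre_offset_cong:
  "(\<And>j. j < length ns - 1 \<Longrightarrow> x j = y j) \<Longrightarrow> centre_offset ns x = centre_offset ns y"
  unfolding centre_offset_def by simp

lemma centre_offset_spine_point [simp]: "centre_offset ns (spine_point ns x) = 0"
  by (simp add: centre_offset_eq_0_iff spine_point_def)

lemma grid_edge_intro:
  assumes "x \<in> grid_vertices ns" "y \<in> grid_vertices ns" "i < length ns" "x i + 1 = y i"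
    "\<And>j. j \<noteq> i \<Longrightarrow> x j = y j"
  shows "{x, y} \<in> grid_edges ns" "{y, x} \<in> grid_edges ns"
proof -
  show "{x, y} \<in> grid_edges ns" using assms unfolding grid_edges_def by blast
  then show "{y, x} \<in> grid_edges ns" by (simp add: insert_commute)
qed

lemma spine_point_eq_self: "centre_offset ns x = 0 \<Longrightarrow> spine_point ns x = x"
  unfolding spine_point_def centre_offset_eq_0_iff by auto

lemma finite_grid_vertices: "finite (grid_vertices ns)"
proof (rule finite_subset)
  have "x i \<le> sum_list ns" if "x \<in> grid_vertices ns" "i < length ns" for x i
  proof -
    have "x i \<le> ns ! i" using that unfolding grid_vertices_def by simp
    then show ?thesis using elem_le_sum_list[OF that(2)] by linarith
  qed
  then show "grid_vertices ns \<subseteq>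
    {x. \<forall>i. (i \<in> {..<length ns} \<longrightarrow> x i \<in> {..sum_list ns}) \<and> (i \<notin> {..<length ns} \<longrightarrow> x i = 0)}"
    unfolding grid_vertices_def by auto
qed (intro finite_set_of_finite_funs finite_lessThan finite_atMost)

lemma finite_grid_edges: "finite (grid_edges ns)"
proof (rule finite_subset)
  show "grid_edges ns \<subseteq> (\<lambda>(x, y). {x, y}) ` (grid_vertices ns \<times> grid_vertices ns)"
    unfolding grid_edges_def by auto
qed (simp add: finite_grid_vertices)

context
  fixes ns :: "nat list"
  assumes ns_ne: "ns \<noteq> []" and ns_pos: "\<forall>i<length ns. 1 \<le> ns ! i"
begin

lemma grid_centre_bounds: "i < length ns \<Longrightarrow> 1 \<le> grid_centre ns i \<and> grid_centre ns i \<le> ns ! i"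
  using ns_pos unfolding grid_centre_def by auto

lemma centre_offset_le:
  "x \<in> grid_vertices ns \<Longrightarrow> centre_offset ns x \<le> (\<Sum>i<length ns - 1. ns ! i div 2)"
  unfolding centre_offset_def grid_centre_def grid_vertices_def
  by (intro sum_mono nat_dist_centre_le) auto

lemma spine_point_in: "x \<in> grid_vertices ns \<Longrightarrow> spine_point ns x \<in> grid_vertices ns"
  using grid_centre_bounds unfolding grid_vertices_def spine_point_def by auto

lemma grid_root_in: "grid_root ns \<in> grid_vertices ns"
proof -
  have "\<not> length ns \<le> length ns - 1" using ns_ne by (simp add: not_le)
  then show ?thesis
    using grid_centre_bounds ns_pos unfolding grid_vertices_def grid_root_def by auto
qed

lemma grid_root_eq_iff:
  assumes "x \<in> grid_vertices ns"
  shows "x = grid_root ns \<longleftrightarrow> centre_offset ns x = 0 \<and> x (length ns - 1) = 1"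
proof
  assume "centre_offset ns x = 0 \<and> x (length ns - 1) = 1"
  then show "x = grid_root ns"
    using assms ns_ne unfolding grid_vertices_def grid_root_def centre_offset_eq_0_iff
    by (auto simp: fun_eq_iff)
qed (simp add: centre_offset_eq_0_iff grid_root_def)

lemma grid_parent_off_spine:
  assumes x: "x \<in> grid_vertices ns" and off: "centre_offset ns x \<noteq> 0"
  shows "grid_parent ns x \<in> grid_vertices ns"
    and "centre_offset ns (grid_parent ns x) + 1 = centre_offset ns x"
    and "spine_point ns (grid_parent ns x) = spine_point ns x"
    and "{x, grid_parent ns x} \<in> grid_edges ns"
proof -
  define j where "j = (LEAST j. j < length ns - 1 \<and> x j \<noteq> grid_centre ns j)"
  have "\<exists>j<length ns - 1. x j \<noteq> grid_centre ns j" using off by (auto simp: centre_offset_eq_0_iff)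
  then have j: "j < length ns - 1" "x j \<noteq> grid_centre ns j"
    unfolding j_def by (metis (mono_tags, lifting) LeastI_ex)+
  define a where "a = step_toward (grid_centre ns j) (x j)"
  have gp: "grid_parent ns x = x(j := a)"
    using off unfolding grid_parent_def j_def a_def by (simp add: Let_def)
  have "1 \<le> x j" "x j \<le> ns ! j" "1 \<le> grid_centre ns j" "grid_centre ns j \<le> ns ! j"
    using x j(1) grid_centre_bounds[of j] unfolding grid_vertices_def by auto
  then have a: "1 \<le> a" "a \<le> ns ! j" "a + 1 = x j \<or> x j + 1 = a"
    using j(2) unfolding a_def step_toward_def by auto
  show xa: "grid_parent ns x \<in> grid_vertices ns"
    using x a j(1) unfolding gp grid_vertices_def by auto
  show "centre_offset ns (grid_parent ns x) + 1 = centre_offset ns x"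
    using centre_offset_upd[OF j(1), of x a] nat_dist_step_toward[OF j(2)] unfolding gp a_def
    by linarith
  show "spine_point ns (grid_parent ns x) = spine_point ns x"
    using j(1) unfolding gp spine_point_def by auto
  have "j < length ns" using j(1) by simp
  then show "{x, grid_parent ns x} \<in> grid_edges ns"
    using a(3) grid_edge_intro[OF x xa] grid_edge_intro[OF xa x] unfolding gp by auto
qed

lemma grid_parent_on_spine:
  assumes x: "x \<in> grid_vertices ns" and off: "centre_offset ns x = 0"
    and two: "2 \<le> x (length ns - 1)"
  shows "grid_parent ns x = x(length ns - 1 := x (length ns - 1) - 1)"
    and "grid_parent ns x \<in> grid_vertices ns"
    and "{x, grid_parent ns x} \<in> grid_edges ns"
proof -
  show gp: "grid_parent ns x = x(length ns - 1 := x (length ns - 1) - 1)"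
    using off unfolding grid_parent_def by simp
  show xa: "grid_parent ns x \<in> grid_vertices ns"
    using x two unfolding gp grid_vertices_def by auto
  have "length ns - 1 < length ns" using ns_ne by simp
  then show "{x, grid_parent ns x} \<in> grid_edges ns"
    using grid_edge_intro(2)[OF xa x] two unfolding gp by auto
qed

lemma last_axis_pos: "x \<in> grid_vertices ns \<Longrightarrow> 1 \<le> x (length ns - 1)"
  using ns_ne unfolding grid_vertices_def by auto

lemma grid_parent_step:
  assumes y: "y \<in> grid_vertices ns" "y \<noteq> grid_root ns"
  shows "grid_parent ns y \<in> grid_vertices ns"
    and "grid_height ns (grid_parent ns y) + 1 = grid_height ns y"
    and "{y, grid_parent ns y} \<in> grid_edges ns"
proof -
  have "centre_offset ns y \<noteq> 0 \<or> centre_offset ns y = 0 \<and> 2 \<le> y (length ns - 1)"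
  proof (cases "centre_offset ns y = 0")
    case True
    then have "y (length ns - 1) \<noteq> 1" using y grid_root_eq_iff by blast
    then show ?thesis using True last_axis_pos[OF y(1)] by simp
  qed simp
  then have "grid_parent ns y \<in> grid_vertices ns \<and> grid_height ns (grid_parent ns y) + 1 = grid_height ns y
    \<and> {y, grid_parent ns y} \<in> grid_edges ns"
  proof
    assume off: "centre_offset ns y \<noteq> 0"
    have "spine_point ns (grid_parent ns y) (length ns - 1) = spine_point ns y (length ns - 1)"
      using grid_parent_off_spine(3)[OF y(1) off] by simp
    then show ?thesis
      using grid_parent_off_spine[OF y(1) off]
      unfolding grid_height_def spine_point_def by simp
  next
    assume spine: "centre_offset ns y = 0 \<and> 2 \<le> y (length ns - 1)"
    then have "centre_offset ns (grid_parent ns y) = 0"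
      using grid_parent_on_spine(1)[OF y(1)] centre_offset_cong[of ns "grid_parent ns y" y]
      by simp
    then show ?thesis
      using grid_parent_on_spine[OF y(1)] spine unfolding grid_height_def by auto
  qed
  then show "grid_parent ns y \<in> grid_vertices ns"
    and "grid_height ns (grid_parent ns y) + 1 = grid_height ns y"
    and "{y, grid_parent ns y} \<in> grid_edges ns" by simp_all
qed

lemma parent_map_grid:
  "parent_map (grid_vertices ns) (grid_root ns) (grid_parent ns) (grid_height ns)"
proof
  fix y assume y: "y \<in> grid_vertices ns"
  have "1 \<le> y (length ns - 1)" by (rule last_axis_pos[OF y])
  then show "grid_height ns y = 0 \<longleftrightarrow> y = grid_root ns"
    using grid_root_eq_iff[OF y] unfolding grid_height_def by auto
qed (use grid_root_in grid_parent_step in auto)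

lemma funpow_grid_parent_spine_point:
  "x \<in> grid_vertices ns \<Longrightarrow> (grid_parent ns ^^ centre_offset ns x) x = spine_point ns x"
proof (induction "centre_offset ns x" arbitrary: x)
  case 0
  then show ?case using spine_point_eq_self by simp
next
  case (Suc k)
  then have off: "centre_offset ns x \<noteq> 0" by simp
  note step = grid_parent_off_spine[OF Suc.prems off]
  have "(grid_parent ns ^^ Suc k) x = (grid_parent ns ^^ k) (grid_parent ns x)"
    by (simp only: funpow_Suc_right o_apply)
  also have "\<dots> = spine_point ns (grid_parent ns x)"
  proof -
    have "k = centre_offset ns (grid_parent ns x)" using Suc.hyps(2) step(2) by linarith
    then show ?thesis using Suc.hyps(1) step(1) by simp
  qed
  finally show ?case using step(3) Suc.hyps(2) by simp
qed

lemma grid_edge_common_ancestor: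
  assumes x: "x \<in> grid_vertices ns" and y: "y \<in> grid_vertices ns" and i: "i < length ns"
    and xy: "x i + 1 = y i" and other: "\<And>j. j \<noteq> i \<Longrightarrow> x j = y j"
  obtains a b where "a \<le> grid_height ns x" "b \<le> grid_height ns y"
    "(grid_parent ns ^^ a) x = (grid_parent ns ^^ b) y"
    "a + b \<le> 2 * (\<Sum>i<length ns - 1. ns ! i div 2) + 1"
proof (cases "i < length ns - 1")
  case True
  have "spine_point ns x = spine_point ns y"
    using True other unfolding spine_point_def by auto
  then show thesis
    using that[of "centre_offset ns x" "centre_offset ns y"] centre_offset_le[OF x] centre_offset_le[OF y]
    by (simp add: grid_height_def funpow_grid_parent_spine_point x y)
next
  case False
  then have i_last: "i = length ns - 1" using i by simp
  let ?z = "spine_point ns y"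
  have off: "centre_offset ns x = centre_offset ns y"
    using i_last other by (intro centre_offset_cong) simp
  have two: "2 \<le> ?z (length ns - 1)"
    using xy i_last last_axis_pos[OF x] False unfolding spine_point_def by simp
  have "(grid_parent ns ^^ Suc (centre_offset ns y)) y = grid_parent ns ?z"
    using funpow_grid_parent_spine_point[OF y] by simp
  also have "\<dots> = ?z(length ns - 1 := ?z (length ns - 1) - 1)"
    using grid_parent_on_spine(1)[OF spine_point_in[OF y] centre_offset_spine_point two] .
  also have "\<dots> = spine_point ns x"
    using xy i_last other False unfolding spine_point_def by (auto simp: fun_eq_iff)
  finally have "(grid_parent ns ^^ centre_offset ns x) x = (grid_parent ns ^^ Suc (centre_offset ns y)) y"
    using funpow_grid_parent_spine_point[OF x] by simp
  moreover have "Suc (centre_offset ns y) \<le> grid_height ns y"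
    using two False unfolding grid_height_def spine_point_def by simp
  ultimately show thesis
    using that[of "centre_offset ns x" "Suc (centre_offset ns y)"] off centre_offset_le[OF y]
    by (simp add: grid_height_def)
qed

lemma gdist_grid_tree_edge:
  assumes "{u, v} \<in> grid_edges ns"
  shows "gdist (grid_tree ns) u v \<le> 2 * (\<Sum>i<length ns - 1. ns ! i div 2) + 1"
proof -
  interpret parent_map "grid_vertices ns" "grid_root ns" "grid_parent ns" "grid_height ns"
    by (rule parent_map_grid)
  obtain x y i where uv: "{u, v} = {x, y}" and x: "x \<in> grid_vertices ns" and y: "y \<in> grid_vertices ns"
    and edge: "i < length ns" "x i + 1 = y i" "\<forall>j. j \<noteq> i \<longrightarrow> x j = y j"
    using assms unfolding grid_edges_def by blast
  obtain a b where ab: "a \<le> grid_height ns x" "b \<le> grid_height ns y"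
    "(grid_parent ns ^^ a) x = (grid_parent ns ^^ b) y"
    "a + b \<le> 2 * (\<Sum>i<length ns - 1. ns ! i div 2) + 1"
    using grid_edge_common_ancestor[OF x y edge(1,2)] edge(3) by blast
  have "gdist tree x y \<le> a + b" "gdist tree y x \<le> b + a"
    using gdist_le_common_ancestor[OF x y ab(1-3)] gdist_le_common_ancestor[OF y x ab(2,1) ab(3)[symmetric]]
    by simp_all
  with uv ab(4) show ?thesis by (auto simp: doubleton_eq_iff)
qed

lemma grid_has_edge:
  assumes "2 \<le> ns ! (length ns - 1)"
  shows "{grid_root ns, (grid_root ns)(length ns - 1 := 2)} \<in> grid_edges ns"
    and "grid_root ns \<noteq> (grid_root ns)(length ns - 1 := 2)"
proof -
  have "length ns - 1 < length ns" "\<not> length ns \<le> length ns - 1" using ns_ne by (simp_all add: not_le)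
  moreover have "(grid_root ns)(length ns - 1 := 2) \<in> grid_vertices ns"
    using grid_root_in assms calculation unfolding grid_vertices_def by auto
  ultimately show "{grid_root ns, (grid_root ns)(length ns - 1 := 2)} \<in> grid_edges ns"
    using grid_edge_intro(1)[OF grid_root_in] by (simp add: grid_root_def)
  show "grid_root ns \<noteq> (grid_root ns)(length ns - 1 := 2)"
    by (simp add: grid_root_def fun_eq_iff)
qed

end

theorem lemma4p1:
  fixes ns :: "nat list"
  assumes "length ns \<ge> 1"
    and "\<forall>i<length ns. 2 \<le> ns ! i"
    and "sorted ns"
  shows "tree_spanner_index (grid_vertices ns) (grid_edges ns)
           \<le> 2 * (\<Sum>i<length ns - 1. ns ! i div 2) + 1"
proof -
  have ne: "ns \<noteq> []" using assms(1) by auto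
  have pos: "\<forall>i<length ns. 1 \<le> ns ! i" using assms(2) by force
  have last: "2 \<le> ns ! (length ns - 1)" using assms(2) ne by simp
  interpret parent_map "grid_vertices ns" "grid_root ns" "grid_parent ns" "grid_height ns"
    by (rule parent_map_grid[OF ne pos])
  have "spanning_tree (grid_vertices ns) (grid_edges ns) (grid_tree ns)"
    by (rule spanning_tree_parent_tree) (rule grid_parent_step(3)[OF ne pos])
  moreover have "stretch (grid_edges ns) (grid_tree ns) \<le> 2 * (\<Sum>i<length ns - 1. ns ! i div 2) + 1"
    by (rule stretch_le[OF grid_has_edge[OF ne pos last]]) (rule gdist_grid_tree_edge[OF ne pos])
  ultimately show ?thesis
    using tree_spanner_index_le[OF finite_grid_edges] by (meson le_trans)
qed

end
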